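(* Let $\lambda_1,\dots,\lambda_5,p,q$ be arbitrary integers, let $A(x_1,x_2,x_3)$ be the $3\times3$ matrix $[x_{ij}]$ with $x_{11}=x_1,\ x_{12}=x_2,\ x_{13}=x_3$, $x_{21}=-\lambda_3(\lambda_1-\lambda_2-\lambda_3+\lambda_5)x_2-\lambda_3(\lambda_2-\lambda_4)x_3$, $x_{22}=x_1+\lambda_1x_2+\lambda_2x_3$, $x_{23}=\lambda_3x_2+\lambda_3x_3$, $x_{31}=-\lambda_3(\lambda_2-\lambda_4)x_2+(-\lambda_1\lambda_4+\lambda_2^2-\lambda_2\lambda_5+\lambda_3\lambda_4)x_3$, $x_{32}=\lambda_2x_2+\lambda_4x_3$, $x_{33}=x_1+\lambda_3x_2+\lambda_5x_3$, and let $$P(x_1,\dots,x_6)=\begin{bmatrix}A(x_1,x_2,x_3) & A(x_4,x_5,x_6)\\ -qA(x_4,x_5,x_6) & A(x_1,x_2,x_3)+pA(x_4,x_5,x_6)\end{bmatrix}.$$ Then there exist bilinear forms $z_1,\dots,z_6$ in independent variables $x_1,\dots,x_6,y_1,\dots,y_6$, with coefficients integer polynomials in $\lambda_1,\dots,\lambda_5,p,q$, such that $P(x_1,\dots,x_6)P(y_1,\dots,y_6)=P(z_1,\dots,z_6)$; consequently the senary sextic form $f=\det P$ satisfies $f(x_1,\dots,x_6)f(y_1,\dots,y_6)=f(z_1,\dots,z_6)$. *)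

theory Defs
  imports "Jordan_Normal_Form.Determinant"
begin

text \<open>Integer polynomial expressions in the parameter variables
  (variable 0..4 = lambda1..lambda5, 5 = p, 6 = q).\<close>
datatype ipoly = PVar nat | PConst int | PAdd ipoly ipoly | PMul ipoly ipoly | PNeg ipoly

fun ipeval :: "(nat \<Rightarrow> int) \<Rightarrow> ipoly \<Rightarrow> int" where
  "ipeval v (PVar i) = v i"
| "ipeval v (PConst c) = c"
| "ipeval v (PAdd a b) = ipeval v a + ipeval v b"
| "ipeval v (PMul a b) = ipeval v a * ipeval v b"
| "ipeval v (PNeg a) = - ipeval v a"

definition params :: "int \<Rightarrow> int \<Rightarrow> int \<Rightarrow> int \<Rightarrow> int \<Rightarrow> int \<Rightarrow> int \<Rightarrow> nat \<Rightarrow> int" where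
  "params l1 l2 l3 l4 l5 p q = (\<lambda>i. if i < 7 then [l1, l2, l3, l4, l5, p, q] ! i else 0)"

definition Amat :: "int \<Rightarrow> int \<Rightarrow> int \<Rightarrow> int \<Rightarrow> int \<Rightarrow> int \<Rightarrow> int \<Rightarrow> int \<Rightarrow> int mat" where
  "Amat l1 l2 l3 l4 l5 x1 x2 x3 = mat_of_rows_list 3
     [[x1, x2, x3],
      [- l3 * (l1 - l2 - l3 + l5) * x2 - l3 * (l2 - l4) * x3,
       x1 + l1 * x2 + l2 * x3,
       l3 * x2 + l3 * x3],
      [- l3 * (l2 - l4) * x2 + (- l1 * l4 + l2^2 - l2 * l5 + l3 * l4) * x3,
       l2 * x2 + l4 * x3,
       x1 + l3 * x2 + l5 * x3]]"

text \<open>The 6x6 block matrix P(x_1,...,x_6); x i stands for x_(i+1), i < 6.\<close>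
definition Pmat :: "int \<Rightarrow> int \<Rightarrow> int \<Rightarrow> int \<Rightarrow> int \<Rightarrow> int \<Rightarrow> int \<Rightarrow> (nat \<Rightarrow> int) \<Rightarrow> int mat" where
  "Pmat l1 l2 l3 l4 l5 p q x =
     (let A = Amat l1 l2 l3 l4 l5 (x 0) (x 1) (x 2);
          B = Amat l1 l2 l3 l4 l5 (x 3) (x 4) (x 5)
      in four_block_mat A B ((- q) \<cdot>\<^sub>m B) (A + p \<cdot>\<^sub>m B))"

end

theory Submission
  imports Defs
begin

text \<open>The matrices \<open>A(x\<^sub>1,x\<^sub>2,x\<^sub>3)\<close> are closed under multiplication, so they form a
  three-dimensional algebra over \<open>\<int>[\<lambda>\<^sub>1,\<dots>,\<lambda>\<^sub>5]\<close> whose element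
  \<open>a\<close> is the first row of \<open>A(a)\<close>; its structure constants are the entries of the matrices
  \<open>A(e\<^sub>j)\<close>. The block matrix \<open>P\<close> is the regular representation of this algebra tensored
  with \<open>\<int>[t]/(t\<^sup>2 - p t + q)\<close>, because multiplying two matrices of the shape
  \<open>[[A, B], [-q B, A + p B]]\<close> multiplies \<open>A + B t\<close> modulo \<open>t\<^sup>2 = p t - q\<close>.
  Hence \<open>P(x) P(y) = P(z)\<close> with \<open>z\<close> given by the tensor product structure constants, and
  multiplicativity of the determinant gives the composition law for \<open>det P\<close>.\<close>

lemma quadratic_block_mult:
  fixes A B C D :: "'a :: comm_ring_1 mat" and p q :: 'a
  assumes "A \<in> carrier_mat n n" "B \<in> carrier_mat n n" "C \<in> carrier_mat n n" "D \<in> carrier_mat n n"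
  defines "E \<equiv> A * C + (- q) \<cdot>\<^sub>m (B * D)" and "F \<equiv> A * D + B * C + p \<cdot>\<^sub>m (B * D)"
  shows "four_block_mat A B ((- q) \<cdot>\<^sub>m B) (A + p \<cdot>\<^sub>m B)
         * four_block_mat C D ((- q) \<cdot>\<^sub>m D) (C + p \<cdot>\<^sub>m D)
       = four_block_mat E F ((- q) \<cdot>\<^sub>m F) (E + p \<cdot>\<^sub>m F)"
proof -
  have blocks: "B \<in> carrier_mat n n" "(- q) \<cdot>\<^sub>m B \<in> carrier_mat n n" "A + p \<cdot>\<^sub>m B \<in> carrier_mat n n"
    "D \<in> carrier_mat n n" "(- q) \<cdot>\<^sub>m D \<in> carrier_mat n n" "C + p \<cdot>\<^sub>m D \<in> carrier_mat n n"
    using assms by auto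
  show ?thesis
    unfolding E_def F_def mult_four_block_mat[OF assms(1) blocks(1-3) assms(3) blocks(4-6)]
    using assms
    by (intro cong_four_block_mat eq_matI)
       (auto simp: scalar_prod_def sum.distrib sum_subtractf sum_negf sum_distrib_left algebra_simps)
qed

instantiation ipoly :: "{zero, one, plus, minus, uminus, times}"
begin
definition "0 = PConst 0"
definition "1 = PConst 1"
definition "a + b = PAdd a b"
definition "a - b = PAdd a (PNeg b)"
definition "- a = PNeg a"
definition "a * b = PMul a b"
instance ..
end

lemma ipeval_arith [simp]:
  "ipeval v 0 = 0" "ipeval v 1 = 1"
  "ipeval v (a + b) = ipeval v a + ipeval v b" "ipeval v (a - b) = ipeval v a - ipeval v b"
  "ipeval v (- a) = - ipeval v a" "ipeval v (a * b) = ipeval v a * ipeval v b"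
  by (simp_all add: zero_ipoly_def one_ipoly_def plus_ipoly_def minus_ipoly_def
      uminus_ipoly_def times_ipoly_def)

definition Amat_sym :: "ipoly \<Rightarrow> ipoly \<Rightarrow> ipoly \<Rightarrow> ipoly list list" where
  "Amat_sym x1 x2 x3 =
    (let l1 = PVar 0; l2 = PVar 1; l3 = PVar 2; l4 = PVar 3; l5 = PVar 4 in
     [[x1, x2, x3],
      [- l3 * (l1 - l2 - l3 + l5) * x2 - l3 * (l2 - l4) * x3,
       x1 + l1 * x2 + l2 * x3,
       l3 * x2 + l3 * x3],
      [- l3 * (l2 - l4) * x2 + (- l1 * l4 + l2 * l2 - l2 * l5 + l3 * l4) * x3,
       l2 * x2 + l4 * x3,
       x1 + l3 * x2 + l5 * x3]])"

text \<open>\<open>e\<^sub>i e\<^sub>j\<close> is the \<open>i\<close>-th row of \<open>A(e\<^sub>j)\<close>, since the first row of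
  \<open>A(e\<^sub>i) A(e\<^sub>j) = A(e\<^sub>i e\<^sub>j)\<close> is \<open>e\<^sub>i A(e\<^sub>j)\<close>.\<close>
definition struct_const :: "nat \<Rightarrow> nat \<Rightarrow> nat \<Rightarrow> ipoly" where
  "struct_const k i j =
    Amat_sym (if j = 0 then 1 else 0) (if j = 1 then 1 else 0) (if j = 2 then 1 else 0) ! i ! k"

text \<open>Structure constants of \<open>\<int>[t]/(t\<^sup>2 - p t + q)\<close> in the basis \<open>1, t\<close>:
  \<open>t \<cdot> t = - q + p t\<close>.\<close>
definition quad_const :: "nat \<Rightarrow> nat \<Rightarrow> nat \<Rightarrow> ipoly" where
  "quad_const k i j = (if i = 1 \<and> j = 1 then [- PVar 6, PVar 5] ! k else if k = i + j then 1 else 0)"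

text \<open>Coordinate \<open>3 a + k\<close> of \<open>\<int>\<^sup>6\<close> stands for \<open>t\<^sup>a e\<^sub>k\<close>.\<close>
definition tensor_const :: "nat \<Rightarrow> nat \<Rightarrow> nat \<Rightarrow> ipoly" where
  "tensor_const k i j =
    quad_const (k div 3) (i div 3) (j div 3) * struct_const (k mod 3) (i mod 3) (j mod 3)"

definition high_part :: "(nat \<Rightarrow> int) \<Rightarrow> nat \<Rightarrow> int" where
  "high_part x i = x (i + 3)"

lemma less_3_cases: "(k::nat) < 3 \<Longrightarrow> k = 0 \<or> k = 1 \<or> k = 2"
  by auto

lemma sum_lessThan_3: "(\<Sum>i<3. f i) = f 0 + f 1 + f (2::nat)"
  by (simp add: numeral_3_eq_3 numeral_2_eq_2)

lemma sum_lessThan_6: "(\<Sum>i<6. f i) = f 0 + f 1 + f 2 + f 3 + f 4 + f (5::nat)"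
  by (simp add: eval_nat_numeral)

lemma dim_Amat [simp]:
  "dim_row (Amat l1 l2 l3 l4 l5 x1 x2 x3) = 3" "dim_col (Amat l1 l2 l3 l4 l5 x1 x2 x3) = 3"
  by (simp_all add: Amat_def mat_of_rows_list_def)

lemma Amat_index:
  assumes "i < 3" "j < 3"
  shows "Amat l1 l2 l3 l4 l5 x1 x2 x3 $$ (i, j) =
    [[x1, x2, x3],
     [- l3 * (l1 - l2 - l3 + l5) * x2 - l3 * (l2 - l4) * x3, x1 + l1 * x2 + l2 * x3, l3 * x2 + l3 * x3],
     [- l3 * (l2 - l4) * x2 + (- l1 * l4 + l2 * l2 - l2 * l5 + l3 * l4) * x3, l2 * x2 + l4 * x3,
      x1 + l3 * x2 + l5 * x3]] ! i ! j"
  using assms by (simp add: Amat_def mat_of_rows_list_def power2_eq_square)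

context
  fixes l1 l2 l3 l4 l5 p q :: int
begin

definition Amat_of :: "(nat \<Rightarrow> int) \<Rightarrow> int mat" where
  "Amat_of a = Amat l1 l2 l3 l4 l5 (a 0) (a 1) (a 2)"

abbreviation val :: "ipoly \<Rightarrow> int" where
  "val \<equiv> ipeval (params l1 l2 l3 l4 l5 p q)"

definition amult :: "(nat \<Rightarrow> int) \<Rightarrow> (nat \<Rightarrow> int) \<Rightarrow> nat \<Rightarrow> int" where
  "amult a b k = (\<Sum>i<3. \<Sum>j<3. val (struct_const k i j) * a i * b j)"

lemma val_Amat_sym:
  assumes "i < 3" "j < 3"
  shows "val (Amat_sym x1 x2 x3 ! i ! j) = Amat l1 l2 l3 l4 l5 (val x1) (val x2) (val x3) $$ (i, j)"
  using assms by (auto dest!: less_3_cases simp: Amat_index Amat_sym_def Let_def params_def)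

lemma dim_Amat_of [simp]: "dim_row (Amat_of a) = 3" "dim_col (Amat_of a) = 3"
  by (simp_all add: Amat_of_def)

lemma Amat_of_carrier [simp]: "Amat_of a \<in> carrier_mat 3 3"
  by (rule carrier_matI) simp_all

lemma Amat_of_cong: "(\<And>k. k < 3 \<Longrightarrow> a k = b k) \<Longrightarrow> Amat_of a = Amat_of b"
  by (simp add: Amat_of_def)

lemma Amat_of_add: "Amat_of a + Amat_of b = Amat_of (\<lambda>k. a k + b k)"
  by (rule eq_matI) (auto dest!: less_3_cases simp: Amat_of_def Amat_index algebra_simps)

lemma Amat_of_smult: "c \<cdot>\<^sub>m Amat_of a = Amat_of (\<lambda>k. c * a k)"
  by (rule eq_matI) (auto dest!: less_3_cases simp: Amat_of_def Amat_index algebra_simps)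

lemma val_struct_const:
  assumes "i < 3" "k < 3"
  shows "val (struct_const k i j)
    = Amat l1 l2 l3 l4 l5 (of_bool (j = 0)) (of_bool (j = 1)) (of_bool (j = 2)) $$ (i, k)"
  using assms by (simp add: struct_const_def val_Amat_sym)

lemma Amat_of_mult_index:
  assumes "i < 3" "k < 3"
  shows "(\<Sum>m<3. Amat_of a $$ (i, m) * Amat_of b $$ (m, k)) = Amat_of (amult a b) $$ (i, k)"
  using assms
  by (auto dest!: less_3_cases simp: Amat_of_def amult_def sum_lessThan_3 Amat_index val_struct_const
      algebra_simps)

lemma Amat_of_mult: "Amat_of a * Amat_of b = Amat_of (amult a b)"
  by (rule eq_matI) (simp_all add: scalar_prod_def atLeast0LessThan Amat_of_mult_index)

lemma tensor_coords:
  assumes "k < 3"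
  shows "(\<Sum>i<6. \<Sum>j<6. val (tensor_const k i j) * x i * y j)
           = amult x y k - q * amult (high_part x) (high_part y) k"
    and "(\<Sum>i<6. \<Sum>j<6. val (tensor_const (k + 3) i j) * x i * y j)
           = amult x (high_part y) k + amult (high_part x) y k
             + p * amult (high_part x) (high_part y) k"
  using assms
  by (auto dest!: less_3_cases simp: sum_lessThan_6 sum_lessThan_3 tensor_const_def quad_const_def
      params_def amult_def high_part_def algebra_simps)

lemma Pmat_eq_block:
  "Pmat l1 l2 l3 l4 l5 p q x
    = four_block_mat (Amat_of x) (Amat_of (high_part x))
        ((- q) \<cdot>\<^sub>m Amat_of (high_part x)) (Amat_of x + p \<cdot>\<^sub>m Amat_of (high_part x))"
  by (simp add: Pmat_def Let_def Amat_of_def high_part_def)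

lemma Pmat_carrier: "Pmat l1 l2 l3 l4 l5 p q x \<in> carrier_mat 6 6"
proof -
  have "Pmat l1 l2 l3 l4 l5 p q x \<in> carrier_mat (3 + 3) (3 + 3)"
    unfolding Pmat_eq_block by (rule four_block_carrier_mat) simp_all
  then show ?thesis by simp
qed

lemma Pmat_mult:
  fixes x y :: "nat \<Rightarrow> int"
  defines "z \<equiv> \<lambda>k. \<Sum>i<6. \<Sum>j<6. val (tensor_const k i j) * x i * y j"
  shows "Pmat l1 l2 l3 l4 l5 p q x * Pmat l1 l2 l3 l4 l5 p q y = Pmat l1 l2 l3 l4 l5 p q z"
proof -
  let ?x' = "high_part x" and ?y' = "high_part y"
  have "Amat_of x * Amat_of y + (- q) \<cdot>\<^sub>m (Amat_of ?x' * Amat_of ?y')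
      = Amat_of (\<lambda>k. amult x y k + - q * amult ?x' ?y' k)"
    unfolding Amat_of_mult Amat_of_smult Amat_of_add ..
  also have "\<dots> = Amat_of z"
    by (rule Amat_of_cong) (simp add: z_def tensor_coords)
  finally have low: "Amat_of x * Amat_of y + (- q) \<cdot>\<^sub>m (Amat_of ?x' * Amat_of ?y') = Amat_of z" .
  have "Amat_of x * Amat_of ?y' + Amat_of ?x' * Amat_of y + p \<cdot>\<^sub>m (Amat_of ?x' * Amat_of ?y')
      = Amat_of (\<lambda>k. amult x ?y' k + amult ?x' y k + p * amult ?x' ?y' k)"
    unfolding Amat_of_mult Amat_of_smult Amat_of_add ..
  also have "\<dots> = Amat_of (high_part z)"
    by (rule Amat_of_cong) (simp add: z_def high_part_def tensor_coords)
  finally have high: "Amat_of x * Amat_of ?y' + Amat_of ?x' * Amat_of y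
      + p \<cdot>\<^sub>m (Amat_of ?x' * Amat_of ?y') = Amat_of (high_part z)" .
  show ?thesis
    unfolding Pmat_eq_block
      quadratic_block_mult[OF Amat_of_carrier Amat_of_carrier Amat_of_carrier Amat_of_carrier] low high ..
qed

end

theorem mainTheorem8:
  shows "\<exists>c :: nat \<Rightarrow> nat \<Rightarrow> nat \<Rightarrow> ipoly.
    \<forall>l1 l2 l3 l4 l5 p q :: int. \<forall>x y :: nat \<Rightarrow> int.
      Pmat l1 l2 l3 l4 l5 p q x * Pmat l1 l2 l3 l4 l5 p q y
        = Pmat l1 l2 l3 l4 l5 p q
            (\<lambda>k. \<Sum>i<6. \<Sum>j<6. ipeval (params l1 l2 l3 l4 l5 p q) (c k i j) * x i * y j)
      \<and> det (Pmat l1 l2 l3 l4 l5 p q x) * det (Pmat l1 l2 l3 l4 l5 p q y)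
        = det (Pmat l1 l2 l3 l4 l5 p q
            (\<lambda>k. \<Sum>i<6. \<Sum>j<6. ipeval (params l1 l2 l3 l4 l5 p q) (c k i j) * x i * y j))"
proof (intro exI allI conjI)
  fix l1 l2 l3 l4 l5 p q :: int and x y :: "nat \<Rightarrow> int"
  show mult: "Pmat l1 l2 l3 l4 l5 p q x * Pmat l1 l2 l3 l4 l5 p q y
    = Pmat l1 l2 l3 l4 l5 p q
        (\<lambda>k. \<Sum>i<6. \<Sum>j<6. ipeval (params l1 l2 l3 l4 l5 p q) (tensor_const k i j) * x i * y j)"
    by (rule Pmat_mult)
  show "det (Pmat l1 l2 l3 l4 l5 p q x) * det (Pmat l1 l2 l3 l4 l5 p q y)
    = det (Pmat l1 l2 l3 l4 l5 p q
        (\<lambda>k. \<Sum>i<6. \<Sum>j<6. ipeval (params l1 l2 l3 l4 l5 p q) (tensor_const k i j) * x i * y j))"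
    unfolding mult[symmetric] by (rule det_mult[OF Pmat_carrier Pmat_carrier, symmetric])
qed

end
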